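(* Let $M$ be a finite $\Sigma$-Rickart right $R$-module and $P$ a simple right $R$-module with $\mathrm{Hom}_R(M,P)=0$. Then $M^{(\ell)}\oplus P^{(n)}$ is a finite $\Sigma$-Rickart module for all integers $\ell,n>0$.
   Context: $M^{(n)}$ is the direct sum of $n$ copies of $M$. $M$ is Rickart if $\ker\varphi$ is a direct summand of $M$ for all $\varphi\in\mathrm{End}_R(M)$; $M$ is finite $\Sigma$-Rickart if $M^{(n)}$ is Rickart for all $n>0$. *)

theory Defs
  imports "HOL-Algebra.Ring"
begin

record ('r, 'a) rmod =
  mcarrier :: "'a set"
  madd :: "'a \<Rightarrow> 'a \<Rightarrow> 'a"
  mzero :: 'a
  msmult :: "'a \<Rightarrow> 'r \<Rightarrow> 'a"

definition right_module :: "('r, 'b) ring_scheme \<Rightarrow> ('r, 'a) rmod \<Rightarrow> bool" where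
  "right_module R M \<longleftrightarrow> ring R \<and>
     mzero M \<in> mcarrier M \<and>
     (\<forall>x\<in>mcarrier M. \<forall>y\<in>mcarrier M. madd M x y \<in> mcarrier M) \<and>
     (\<forall>x\<in>mcarrier M. \<forall>y\<in>mcarrier M. \<forall>z\<in>mcarrier M.
        madd M (madd M x y) z = madd M x (madd M y z)) \<and>
     (\<forall>x\<in>mcarrier M. \<forall>y\<in>mcarrier M. madd M x y = madd M y x) \<and>
     (\<forall>x\<in>mcarrier M. madd M (mzero M) x = x) \<and>
     (\<forall>x\<in>mcarrier M. \<exists>y\<in>mcarrier M. madd M x y = mzero M) \<and>
     (\<forall>x\<in>mcarrier M. \<forall>r\<in>carrier R. msmult M x r \<in> mcarrier M) \<and>
     (\<forall>x\<in>mcarrier M. \<forall>y\<in>mcarrier M. \<forall>r\<in>carrier R.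
        msmult M (madd M x y) r = madd M (msmult M x r) (msmult M y r)) \<and>
     (\<forall>x\<in>mcarrier M. \<forall>r\<in>carrier R. \<forall>s\<in>carrier R.
        msmult M x (r \<oplus>\<^bsub>R\<^esub> s) = madd M (msmult M x r) (msmult M x s)) \<and>
     (\<forall>x\<in>mcarrier M. \<forall>r\<in>carrier R. \<forall>s\<in>carrier R.
        msmult M x (r \<otimes>\<^bsub>R\<^esub> s) = msmult M (msmult M x r) s) \<and>
     (\<forall>x\<in>mcarrier M. msmult M x \<one>\<^bsub>R\<^esub> = x)"

definition submodule :: "('r, 'b) ring_scheme \<Rightarrow> ('r, 'a) rmod \<Rightarrow> 'a set \<Rightarrow> bool" where
  "submodule R M N \<longleftrightarrow> N \<subseteq> mcarrier M \<and> mzero M \<in> N \<and>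
     (\<forall>x\<in>N. \<forall>y\<in>N. madd M x y \<in> N) \<and>
     (\<forall>x\<in>N. \<forall>r\<in>carrier R. msmult M x r \<in> N)"

definition mhom :: "('r, 'b) ring_scheme \<Rightarrow> ('r, 'a) rmod \<Rightarrow> ('r, 'c) rmod \<Rightarrow> ('a \<Rightarrow> 'c) \<Rightarrow> bool" where
  "mhom R M P f \<longleftrightarrow> f \<in> mcarrier M \<rightarrow> mcarrier P \<and>
     (\<forall>x\<in>mcarrier M. \<forall>y\<in>mcarrier M. f (madd M x y) = madd P (f x) (f y)) \<and>
     (\<forall>x\<in>mcarrier M. \<forall>r\<in>carrier R. f (msmult M x r) = msmult P (f x) r)"

definition mker :: "('r, 'a) rmod \<Rightarrow> ('r, 'c) rmod \<Rightarrow> ('a \<Rightarrow> 'c) \<Rightarrow> 'a set" where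
  "mker M P f = {x \<in> mcarrier M. f x = mzero P}"

definition direct_summand :: "('r, 'b) ring_scheme \<Rightarrow> ('r, 'a) rmod \<Rightarrow> 'a set \<Rightarrow> bool" where
  "direct_summand R M K \<longleftrightarrow> submodule R M K \<and>
     (\<exists>N. submodule R M N \<and> K \<inter> N = {mzero M} \<and>
          (\<forall>x\<in>mcarrier M. \<exists>a\<in>K. \<exists>b\<in>N. x = madd M a b))"

definition rickart :: "('r, 'b) ring_scheme \<Rightarrow> ('r, 'a) rmod \<Rightarrow> bool" where
  "rickart R M \<longleftrightarrow> (\<forall>f. mhom R M M f \<longrightarrow> direct_summand R M (mker M M f))"

text \<open>Direct sum M^(n) of n copies of M, realised as functions nat \<Rightarrow> 'a vanishing outside {..<n}.\<close>
definition dpow :: "('r, 'a) rmod \<Rightarrow> nat \<Rightarrow> ('r, nat \<Rightarrow> 'a) rmod" where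
  "dpow M n = \<lparr> mcarrier = {x. (\<forall>i<n. x i \<in> mcarrier M) \<and> (\<forall>i\<ge>n. x i = mzero M)},
               madd = (\<lambda>x y i. madd M (x i) (y i)),
               mzero = (\<lambda>i. mzero M),
               msmult = (\<lambda>x r i. msmult M (x i) r) \<rparr>"

definition dsum :: "('r, 'a) rmod \<Rightarrow> ('r, 'c) rmod \<Rightarrow> ('r, 'a \<times> 'c) rmod" where
  "dsum M P = \<lparr> mcarrier = mcarrier M \<times> mcarrier P,
               madd = (\<lambda>x y. (madd M (fst x) (fst y), madd P (snd x) (snd y))),
               mzero = (mzero M, mzero P),
               msmult = (\<lambda>x r. (msmult M (fst x) r, msmult P (snd x) r)) \<rparr>"

definition finite_sigma_rickart :: "('r, 'b) ring_scheme \<Rightarrow> ('r, 'a) rmod \<Rightarrow> bool" where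
  "finite_sigma_rickart R M \<longleftrightarrow> (\<forall>n>0. rickart R (dpow M n))"

definition simple_module :: "('r, 'b) ring_scheme \<Rightarrow> ('r, 'a) rmod \<Rightarrow> bool" where
  "simple_module R P \<longleftrightarrow> right_module R P \<and> mcarrier P \<noteq> {mzero P} \<and>
     (\<forall>N. submodule R P N \<longrightarrow> N = {mzero P} \<or> N = mcarrier P)"

end

theory Submission
  imports Defs
begin

text \<open>For \<open>k > 0\<close> we have \<open>(M^(l) \<oplus> P^(n))^(k) \<cong> M^(lk) \<oplus> P^(nk)\<close>, where \<open>N = M^(lk)\<close> is
  Rickart by hypothesis, \<open>Q = P^(nk)\<close> is semisimple because \<open>P\<close> is simple, and \<open>Hom(N, Q) = 0\<close>.
  For such \<open>N\<close> and \<open>Q\<close> every endomorphism \<open>p\<close> of \<open>N \<oplus> Q\<close> maps \<open>N\<close> into \<open>N\<close>, so the part of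
  \<open>ker p\<close> lying in \<open>N\<close> is the kernel of an endomorphism of \<open>N\<close> and has a complement \<open>C\<close>; the
  projection of \<open>ker p\<close> to \<open>Q\<close> has a complement \<open>T'\<close> by semisimplicity, and \<open>C \<times> T'\<close>
  complements \<open>ker p\<close>. The Rickart property is invariant under isomorphism.\<close>

locale rmodule =
  fixes R :: "('r, 'b) ring_scheme" and M :: "('r, 'a) rmod"
  assumes right_module: "right_module R M"
begin

lemma ring: "ring R"
  and zero_closed [simp]: "mzero M \<in> mcarrier M"
  and add_closed [simp]: "\<lbrakk>x \<in> mcarrier M; y \<in> mcarrier M\<rbrakk> \<Longrightarrow> madd M x y \<in> mcarrier M"
  and add_assoc: "\<lbrakk>x \<in> mcarrier M; y \<in> mcarrier M; z \<in> mcarrier M\<rbrakk> \<Longrightarrow>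
      madd M (madd M x y) z = madd M x (madd M y z)"
  and add_comm: "\<lbrakk>x \<in> mcarrier M; y \<in> mcarrier M\<rbrakk> \<Longrightarrow> madd M x y = madd M y x"
  and add_lzero [simp]: "x \<in> mcarrier M \<Longrightarrow> madd M (mzero M) x = x"
  and smult_closed [simp]: "\<lbrakk>x \<in> mcarrier M; r \<in> carrier R\<rbrakk> \<Longrightarrow> msmult M x r \<in> mcarrier M"
  and smult_add_distrib: "\<lbrakk>x \<in> mcarrier M; y \<in> mcarrier M; r \<in> carrier R\<rbrakk> \<Longrightarrow>
      msmult M (madd M x y) r = madd M (msmult M x r) (msmult M y r)"
  and smult_ring_add_distrib: "\<lbrakk>x \<in> mcarrier M; r \<in> carrier R; s \<in> carrier R\<rbrakk> \<Longrightarrow>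
      msmult M x (r \<oplus>\<^bsub>R\<^esub> s) = madd M (msmult M x r) (msmult M x s)"
  and smult_assoc: "\<lbrakk>x \<in> mcarrier M; r \<in> carrier R; s \<in> carrier R\<rbrakk> \<Longrightarrow>
      msmult M x (r \<otimes>\<^bsub>R\<^esub> s) = msmult M (msmult M x r) s"
  and smult_one [simp]: "x \<in> mcarrier M \<Longrightarrow> msmult M x \<one>\<^bsub>R\<^esub> = x"
  using right_module unfolding right_module_def by auto

lemma add_rzero [simp]: "x \<in> mcarrier M \<Longrightarrow> madd M x (mzero M) = x"
  using add_comm[of x "mzero M"] by simp

lemma add_left_commute:
  "\<lbrakk>x \<in> mcarrier M; y \<in> mcarrier M; z \<in> mcarrier M\<rbrakk> \<Longrightarrow> madd M x (madd M y z) = madd M y (madd M x z)"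
  by (simp add: add_assoc[symmetric] add_comm[of x y])

lemma add_add_swap:
  "\<lbrakk>a \<in> mcarrier M; b \<in> mcarrier M; c \<in> mcarrier M; d \<in> mcarrier M\<rbrakk> \<Longrightarrow>
   madd M (madd M a b) (madd M c d) = madd M (madd M a c) (madd M b d)"
  by (simp add: add_assoc add_left_commute[of b c d])

lemma add_left_cancel:
  assumes "a \<in> mcarrier M" "b \<in> mcarrier M" "c \<in> mcarrier M" and "madd M a b = madd M a c"
  shows "b = c"
proof -
  obtain y where y: "y \<in> mcarrier M" "madd M y a = mzero M"
    using right_module assms(1) add_comm unfolding right_module_def by metis
  have "b = madd M (madd M y a) b" using y assms by simp
  also have "\<dots> = madd M (madd M y a) c" using y(1) assms by (simp add: add_assoc)
  finally show ?thesis using y assms by simp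
qed

lemma idempotent_eq_zero:
  "\<lbrakk>a \<in> mcarrier M; madd M a a = a\<rbrakk> \<Longrightarrow> a = mzero M"
  using add_left_cancel[of a a "mzero M"] by simp

lemma smult_ring_zero [simp]: "x \<in> mcarrier M \<Longrightarrow> msmult M x \<zero>\<^bsub>R\<^esub> = mzero M"
proof -
  interpret ring R by (rule ring)
  assume x: "x \<in> mcarrier M"
  show ?thesis
    using smult_ring_add_distrib[OF x zero_closed zero_closed] x by (intro idempotent_eq_zero) simp_all
qed

lemma zero_smult [simp]: "r \<in> carrier R \<Longrightarrow> msmult M (mzero M) r = mzero M"
  using smult_add_distrib[of "mzero M" "mzero M" r] by (intro idempotent_eq_zero) simp_all

lemma minus_one_closed: "\<ominus>\<^bsub>R\<^esub> \<one>\<^bsub>R\<^esub> \<in> carrier R"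
proof -
  interpret ring R by (rule ring)
  show ?thesis by simp
qed

definition neg :: "'a \<Rightarrow> 'a" where
  "neg x = msmult M x (\<ominus>\<^bsub>R\<^esub> \<one>\<^bsub>R\<^esub>)"

lemma neg_closed [simp]: "x \<in> mcarrier M \<Longrightarrow> neg x \<in> mcarrier M"
  by (simp add: neg_def minus_one_closed)

lemma neg_zero [simp]: "neg (mzero M) = mzero M"
  by (simp add: neg_def minus_one_closed)

lemma add_neg [simp]: "x \<in> mcarrier M \<Longrightarrow> madd M x (neg x) = mzero M"
proof -
  interpret ring R by (rule ring)
  assume x: "x \<in> mcarrier M"
  have "madd M x (neg x) = msmult M x (\<one>\<^bsub>R\<^esub> \<oplus>\<^bsub>R\<^esub> \<ominus>\<^bsub>R\<^esub> \<one>\<^bsub>R\<^esub>)"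
    using x by (simp add: neg_def smult_ring_add_distrib)
  then show ?thesis using x by (simp add: r_neg)
qed

end

lemma rmodule_iff: "rmodule R M \<longleftrightarrow> right_module R M"
  by (simp add: rmodule_def)

lemma submodule_subset: "submodule R M N \<Longrightarrow> N \<subseteq> mcarrier M"
  and submodule_zero: "submodule R M N \<Longrightarrow> mzero M \<in> N"
  and submodule_add: "\<lbrakk>submodule R M N; x \<in> N; y \<in> N\<rbrakk> \<Longrightarrow> madd M x y \<in> N"
  and submodule_smult: "\<lbrakk>submodule R M N; x \<in> N; r \<in> carrier R\<rbrakk> \<Longrightarrow> msmult M x r \<in> N"
  by (auto simp: submodule_def)

definition msum :: "('r, 'a) rmod \<Rightarrow> 'a set \<Rightarrow> 'a set \<Rightarrow> 'a set" where
  "msum M A B = {madd M a b | a b. a \<in> A \<and> b \<in> B}"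

lemma msumI: "\<lbrakk>a \<in> A; b \<in> B\<rbrakk> \<Longrightarrow> madd M a b \<in> msum M A B"
  unfolding msum_def by blast

lemma msumE: "\<lbrakk>x \<in> msum M A B; \<And>a b. \<lbrakk>a \<in> A; b \<in> B; x = madd M a b\<rbrakk> \<Longrightarrow> thesis\<rbrakk> \<Longrightarrow> thesis"
  unfolding msum_def by blast

lemma direct_summand_iff_msum:
  "direct_summand R M K \<longleftrightarrow> submodule R M K \<and>
     (\<exists>N. submodule R M N \<and> K \<inter> N = {mzero M} \<and> mcarrier M \<subseteq> msum M K N)"
proof -
  have "\<And>N. (\<forall>x\<in>mcarrier M. \<exists>a\<in>K. \<exists>b\<in>N. x = madd M a b) \<longleftrightarrow> mcarrier M \<subseteq> msum M K N"
    unfolding msum_def by blast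
  then show ?thesis unfolding direct_summand_def by simp
qed

context rmodule
begin

lemma submodule_neg: "\<lbrakk>submodule R M N; x \<in> N\<rbrakk> \<Longrightarrow> neg x \<in> N"
  by (simp add: neg_def submodule_smult minus_one_closed)

lemma submodule_add_cancel:
  assumes N: "submodule R M N" and "a \<in> N" "b \<in> mcarrier M" "madd M a b \<in> N"
  shows "b \<in> N"
proof -
  have a: "a \<in> mcarrier M" using assms submodule_subset by blast
  have "b = madd M (neg a) (madd M a b)"
    using a assms(3) by (simp add: add_assoc[symmetric] add_comm[of "neg a" a])
  then show ?thesis using assms submodule_add submodule_neg by metis
qed

lemma submodule_zero_set: "submodule R M {mzero M}"
  by (simp add: submodule_def)

lemma submodule_msum:
  assumes A: "submodule R M A" and B: "submodule R M B"
  shows "submodule R M (msum M A B)"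
  unfolding submodule_def
proof (intro conjI ballI)
  have AB: "\<And>x. x \<in> A \<Longrightarrow> x \<in> mcarrier M" "\<And>x. x \<in> B \<Longrightarrow> x \<in> mcarrier M"
    using A B submodule_subset by blast+
  then show "msum M A B \<subseteq> mcarrier M" by (auto elim!: msumE)
  show "mzero M \<in> msum M A B"
    using msumI[where M=M, OF submodule_zero[OF A] submodule_zero[OF B]] by simp
  fix x y assume "x \<in> msum M A B" "y \<in> msum M A B"
  then obtain a b a' b' where ab: "a \<in> A" "b \<in> B" "x = madd M a b"
    and ab': "a' \<in> A" "b' \<in> B" "y = madd M a' b'"
    by (elim msumE)
  then have "madd M x y = madd M (madd M a a') (madd M b b')"
    using AB by (simp add: add_add_swap)
  then show "madd M x y \<in> msum M A B"
    using msumI[where M=M, OF submodule_add[OF A ab(1) ab'(1)] submodule_add[OF B ab(2) ab'(2)]]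
    by simp
next
  fix x r assume "x \<in> msum M A B" and r: "r \<in> carrier R"
  then obtain a b where ab: "a \<in> A" "b \<in> B" "x = madd M a b" by (elim msumE)
  moreover have "a \<in> mcarrier M" "b \<in> mcarrier M" using ab A B submodule_subset by blast+
  ultimately have "msmult M x r = madd M (msmult M a r) (msmult M b r)"
    using r by (simp add: smult_add_distrib)
  then show "msmult M x r \<in> msum M A B"
    using msumI[where M=M, OF submodule_smult[OF A ab(1) r] submodule_smult[OF B ab(2) r]] by simp
qed

lemma msum_upper1: "\<lbrakk>A \<subseteq> mcarrier M; submodule R M B\<rbrakk> \<Longrightarrow> A \<subseteq> msum M A B"
  using msumI[where M=M and b="mzero M" and B=B] submodule_zero[of R M B] by (metis add_rzero subsetD subsetI)

lemma msum_upper2: "\<lbrakk>submodule R M A; B \<subseteq> mcarrier M\<rbrakk> \<Longrightarrow> B \<subseteq> msum M A B"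
  using msumI[where M=M and a="mzero M" and A=A] submodule_zero[of R M A] by (metis add_lzero subsetD subsetI)

end

lemma msum_mono: "B \<subseteq> B' \<Longrightarrow> msum M A B \<subseteq> msum M A B'"
  unfolding msum_def by blast

lemma mhom_closed: "\<lbrakk>mhom R A B f; x \<in> mcarrier A\<rbrakk> \<Longrightarrow> f x \<in> mcarrier B"
  and mhom_add: "\<lbrakk>mhom R A B f; x \<in> mcarrier A; y \<in> mcarrier A\<rbrakk> \<Longrightarrow> f (madd A x y) = madd B (f x) (f y)"
  and mhom_smult: "\<lbrakk>mhom R A B f; x \<in> mcarrier A; r \<in> carrier R\<rbrakk> \<Longrightarrow> f (msmult A x r) = msmult B (f x) r"
  by (auto simp: mhom_def)

lemma mhom_comp: "\<lbrakk>mhom R A B f; mhom R B C g\<rbrakk> \<Longrightarrow> mhom R A C (g \<circ> f)"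
  unfolding mhom_def by (auto simp: Pi_def)

lemma mhom_zero:
  assumes "right_module R A" "right_module R B" and f: "mhom R A B f"
  shows "f (mzero A) = mzero B"
proof -
  interpret A: rmodule R A by (rule rmodule.intro) fact
  interpret B: rmodule R B by (rule rmodule.intro) fact
  show ?thesis
    using mhom_add[OF f A.zero_closed A.zero_closed] mhom_closed[OF f A.zero_closed]
    by (intro B.idempotent_eq_zero) simp_all
qed

lemma submodule_mker:
  assumes A: "right_module R A" and B: "right_module R B" and f: "mhom R A B f"
  shows "submodule R A (mker A B f)"
proof -
  interpret A: rmodule R A by (rule rmodule.intro) fact
  interpret B: rmodule R B by (rule rmodule.intro) fact
  show ?thesis
    unfolding submodule_def mker_def
    using mhom_zero[OF A B f] by (auto simp: mhom_add[OF f] mhom_smult[OF f] mhom_closed[OF f])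
qed

lemma submodule_image:
  assumes A: "right_module R A" and B: "right_module R B" and f: "mhom R A B f"
    and N: "submodule R A N"
  shows "submodule R B (f ` N)"
proof -
  have N': "N \<subseteq> mcarrier A" using N submodule_subset by blast
  show ?thesis unfolding submodule_def
  proof (intro conjI ballI)
    show "f ` N \<subseteq> mcarrier B" using N' mhom_closed[OF f] by blast
    show "mzero B \<in> f ` N" using mhom_zero[OF A B f] submodule_zero[OF N] by force
  next
    fix x y assume "x \<in> f ` N" "y \<in> f ` N"
    then obtain a b where "a \<in> N" "b \<in> N" "x = f a" "y = f b" by blast
    then have "madd B x y = f (madd A a b)" using N' by (simp add: mhom_add[OF f] subset_iff)
    then show "madd B x y \<in> f ` N" using submodule_add[OF N \<open>a \<in> N\<close> \<open>b \<in> N\<close>] by blast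
  next
    fix x r assume "x \<in> f ` N" "r \<in> carrier R"
    then obtain a where "a \<in> N" "x = f a" by blast
    then have "msmult B x r = f (msmult A a r)" using N' \<open>r \<in> carrier R\<close> by (simp add: mhom_smult[OF f] subset_iff)
    then show "msmult B x r \<in> f ` N" using submodule_smult[OF N \<open>a \<in> N\<close> \<open>r \<in> carrier R\<close>] by blast
  qed
qed

lemma submodule_vimage:
  assumes A: "right_module R A" and B: "right_module R B" and f: "mhom R A B f"
    and N: "submodule R B N"
  shows "submodule R A {x \<in> mcarrier A. f x \<in> N}"
proof -
  interpret A: rmodule R A by (rule rmodule.intro) fact
  show ?thesis
    unfolding submodule_def using mhom_zero[OF A B f] N
    by (auto simp: mhom_add[OF f] mhom_smult[OF f] mhom_closed[OF f]
        intro: submodule_add submodule_smult submodule_zero)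
qed

lemma dpow_carrier:
  "x \<in> mcarrier (dpow M n) \<longleftrightarrow> (\<forall>i<n. x i \<in> mcarrier M) \<and> (\<forall>i\<ge>n. x i = mzero M)"
  by (simp add: dpow_def)

lemma dpow_simps [simp]:
  "madd (dpow M n) x y = (\<lambda>i. madd M (x i) (y i))"
  "mzero (dpow M n) = (\<lambda>i. mzero M)"
  "msmult (dpow M n) x r = (\<lambda>i. msmult M (x i) r)"
  by (simp_all add: dpow_def)

lemma (in rmodule) dpow_component: "x \<in> mcarrier (dpow M n) \<Longrightarrow> x i \<in> mcarrier M"
  unfolding dpow_carrier by (cases "i < n") auto

lemma right_module_dpow:
  assumes "right_module R M"
  shows "right_module R (dpow M n)"
proof -
  interpret rmodule R M by (rule rmodule.intro) fact
  have "(\<lambda>i. neg (x i)) \<in> mcarrier (dpow M n) \<and> madd (dpow M n) x (\<lambda>i. neg (x i)) = mzero (dpow M n)"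
    if "x \<in> mcarrier (dpow M n)" for x
    using that by (auto simp: dpow_carrier dpow_component)
  then have "\<forall>x\<in>mcarrier (dpow M n). \<exists>y\<in>mcarrier (dpow M n). madd (dpow M n) x y = mzero (dpow M n)"
    by blast
  then show ?thesis
    unfolding right_module_def using ring
    by (intro conjI) (auto simp: dpow_carrier dpow_component add_assoc add_comm smult_add_distrib
        smult_ring_add_distrib smult_assoc)
qed

lemma dsum_carrier: "x \<in> mcarrier (dsum A B) \<longleftrightarrow> fst x \<in> mcarrier A \<and> snd x \<in> mcarrier B"
  by (cases x) (simp add: dsum_def)

lemma dsum_simps [simp]:
  "madd (dsum A B) x y = (madd A (fst x) (fst y), madd B (snd x) (snd y))"
  "mzero (dsum A B) = (mzero A, mzero B)"
  "msmult (dsum A B) x r = (msmult A (fst x) r, msmult B (snd x) r)"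
  by (simp_all add: dsum_def)

lemma right_module_dsum:
  assumes "right_module R A" "right_module R B"
  shows "right_module R (dsum A B)"
proof -
  interpret A: rmodule R A by (rule rmodule.intro) fact
  interpret B: rmodule R B by (rule rmodule.intro) fact
  have "(A.neg (fst x), B.neg (snd x)) \<in> mcarrier (dsum A B) \<and>
      madd (dsum A B) x (A.neg (fst x), B.neg (snd x)) = mzero (dsum A B)"
    if "x \<in> mcarrier (dsum A B)" for x
    using that by (auto simp: dsum_carrier)
  then have "\<forall>x\<in>mcarrier (dsum A B). \<exists>y\<in>mcarrier (dsum A B). madd (dsum A B) x y = mzero (dsum A B)"
    by blast
  then show ?thesis
    unfolding right_module_def using A.ring
    by (intro conjI) (auto simp: dsum_carrier A.add_assoc B.add_assoc A.add_comm B.add_comm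
        A.add_left_commute B.add_left_commute A.smult_add_distrib
        B.smult_add_distrib A.smult_ring_add_distrib B.smult_ring_add_distrib A.smult_assoc B.smult_assoc)
qed

definition miso :: "('r, 'b) ring_scheme \<Rightarrow> ('r, 'a) rmod \<Rightarrow> ('r, 'c) rmod \<Rightarrow>
    ('a \<Rightarrow> 'c) \<Rightarrow> ('c \<Rightarrow> 'a) \<Rightarrow> bool" where
  "miso R A B f g \<longleftrightarrow> mhom R A B f \<and> mhom R B A g \<and>
     (\<forall>x\<in>mcarrier A. g (f x) = x) \<and> (\<forall>y\<in>mcarrier B. f (g y) = y)"

lemma direct_summand_miso_image:
  assumes A: "right_module R A" and B: "right_module R B" and iso: "miso R A B f g"
    and K: "direct_summand R B K"
  shows "direct_summand R A (g ` K)"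
proof -
  have f: "mhom R A B f" and g: "mhom R B A g" and gf: "\<And>x. x \<in> mcarrier A \<Longrightarrow> g (f x) = x"
    and fg: "\<And>y. y \<in> mcarrier B \<Longrightarrow> f (g y) = y"
    using iso by (auto simp: miso_def)
  obtain W where K_sub: "submodule R B K" and W: "submodule R B W" and KW: "K \<inter> W = {mzero B}"
    and span: "mcarrier B \<subseteq> msum B K W"
    using K by (auto simp: direct_summand_iff_msum)
  have carrier: "\<And>x. x \<in> K \<Longrightarrow> x \<in> mcarrier B" "\<And>x. x \<in> W \<Longrightarrow> x \<in> mcarrier B"
    using K_sub W submodule_subset by blast+
  have "g ` K \<inter> g ` W \<subseteq> {mzero A}"
  proof
    fix z assume "z \<in> g ` K \<inter> g ` W"
    then obtain k w where "k \<in> K" "w \<in> W" "z = g k" "g k = g w" by blast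
    then have "k = w" using fg carrier by metis
    then have "k \<in> K \<inter> W" using \<open>k \<in> K\<close> \<open>w \<in> W\<close> by simp
    then show "z \<in> {mzero A}" using KW mhom_zero[OF B A g] \<open>z = g k\<close> by auto
  qed
  moreover have "mzero A \<in> g ` K \<inter> g ` W"
    using mhom_zero[OF B A g] submodule_zero[OF K_sub] submodule_zero[OF W] by force
  moreover have "mcarrier A \<subseteq> msum A (g ` K) (g ` W)"
  proof
    fix x assume x: "x \<in> mcarrier A"
    then obtain k w where "k \<in> K" "w \<in> W" "f x = madd B k w"
      using span mhom_closed[OF f] by (blast elim: msumE)
    then have "x = madd A (g k) (g w)" using gf[OF x] mhom_add[OF g carrier] by simp
    then show "x \<in> msum A (g ` K) (g ` W)" using \<open>k \<in> K\<close> \<open>w \<in> W\<close> by (simp add: msumI)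
  qed
  ultimately show ?thesis
    unfolding direct_summand_iff_msum
    using submodule_image[OF B A g K_sub] submodule_image[OF B A g W] by blast
qed

lemma rickart_miso:
  assumes A: "right_module R A" and B: "right_module R B" and iso: "miso R A B f g"
    and "rickart R B"
  shows "rickart R A"
  unfolding rickart_def
proof (intro allI impI)
  fix h assume h: "mhom R A A h"
  have f: "mhom R A B f" and g: "mhom R B A g" and gf: "\<And>x. x \<in> mcarrier A \<Longrightarrow> g (f x) = x"
    using iso by (auto simp: miso_def)
  have "mhom R B B (f \<circ> h \<circ> g)" using mhom_comp[OF mhom_comp[OF g h] f] by (simp add: comp_assoc)
  then have "direct_summand R B (mker B B (f \<circ> h \<circ> g))" using \<open>rickart R B\<close> by (simp add: rickart_def)
  moreover have "g ` mker B B (f \<circ> h \<circ> g) = mker A A h"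
  proof (intro equalityI subsetI)
    fix z assume "z \<in> g ` mker B B (f \<circ> h \<circ> g)"
    then obtain y where y: "y \<in> mcarrier B" "f (h (g y)) = mzero B" and z: "z = g y"
      by (auto simp: mker_def)
    have "h z = g (f (h z))" using gf mhom_closed[OF h mhom_closed[OF g y(1)]] z by simp
    then show "z \<in> mker A A h"
      using y z mhom_zero[OF B A g] mhom_closed[OF g] by (simp add: mker_def)
  next
    fix x assume "x \<in> mker A A h"
    then have "x \<in> mcarrier A" "h x = mzero A" by (auto simp: mker_def)
    then have "f x \<in> mker B B (f \<circ> h \<circ> g)" and "x = g (f x)"
      using mhom_closed[OF f] gf mhom_zero[OF A B f] by (auto simp: mker_def)
    then show "x \<in> g ` mker B B (f \<circ> h \<circ> g)" by blast
  qed
  ultimately show "direct_summand R A (mker A A h)"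
    using direct_summand_miso_image[OF A B iso] by fastforce
qed

definition semisimple :: "('r, 'b) ring_scheme \<Rightarrow> ('r, 'a) rmod \<Rightarrow> bool" where
  "semisimple R M \<longleftrightarrow> (\<forall>N. submodule R M N \<longrightarrow> direct_summand R M N)"

lemma semisimple_miso:
  assumes A: "right_module R A" and B: "right_module R B" and iso: "miso R A B f g"
    and "semisimple R B"
  shows "semisimple R A"
  unfolding semisimple_def
proof (intro allI impI)
  fix N assume N: "submodule R A N"
  have f: "mhom R A B f" and gf: "\<And>x. x \<in> mcarrier A \<Longrightarrow> g (f x) = x"
    using iso by (auto simp: miso_def)
  have "direct_summand R B (f ` N)"
    using \<open>semisimple R B\<close> submodule_image[OF A B f N] by (simp add: semisimple_def)
  then have "direct_summand R A (g ` f ` N)" by (rule direct_summand_miso_image[OF A B iso])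
  moreover have "g ` f ` N = N"
    using gf submodule_subset[OF N] by (simp add: image_image subset_iff cong: image_cong)
  ultimately show "direct_summand R A N" by simp
qed

lemma mhom_fst: "mhom R (dsum A B) A fst"
  and mhom_snd: "mhom R (dsum A B) B snd"
  by (auto simp: mhom_def dsum_carrier)

lemma mhom_Pair_zero: "right_module R B \<Longrightarrow> mhom R A (dsum A B) (\<lambda>x. (x, mzero B))"
  by (auto simp: mhom_def dsum_carrier rmodule.add_lzero rmodule.zero_smult rmodule.zero_closed
      rmodule_iff)

lemma submodule_Times:
  "\<lbrakk>submodule R A C; submodule R B D\<rbrakk> \<Longrightarrow> submodule R (dsum A B) (C \<times> D)"
  unfolding submodule_def by (auto simp: dsum_carrier)

lemma dsum_generated:
  assumes "right_module R N" "right_module R Q" and S: "submodule R (dsum N Q) S"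
    and "\<And>x. x \<in> mcarrier N \<Longrightarrow> (x, mzero Q) \<in> S" "\<And>y. y \<in> mcarrier Q \<Longrightarrow> (mzero N, y) \<in> S"
  shows "mcarrier (dsum N Q) \<subseteq> S"
proof
  interpret N: rmodule R N by (rule rmodule.intro) fact
  interpret Q: rmodule R Q by (rule rmodule.intro) fact
  fix z assume "z \<in> mcarrier (dsum N Q)"
  then have "fst z \<in> mcarrier N" "snd z \<in> mcarrier Q" by (simp_all add: dsum_carrier)
  then have "madd (dsum N Q) (fst z, mzero Q) (mzero N, snd z) \<in> S"
    using assms(4,5) by (intro submodule_add[OF S])
  then show "z \<in> S" using \<open>fst z \<in> mcarrier N\<close> \<open>snd z \<in> mcarrier Q\<close> by simp
qed

lemma dsum_inter_Times:
  assumes "K \<subseteq> mcarrier (dsum N Q)"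
    and "{x \<in> mcarrier N. (x, mzero Q) \<in> K} \<inter> C \<subseteq> {mzero N}" and "snd ` K \<inter> T \<subseteq> {mzero Q}"
  shows "K \<inter> (C \<times> T) \<subseteq> {mzero (dsum N Q)}"
proof
  fix z assume z: "z \<in> K \<inter> (C \<times> T)"
  then have "snd z = mzero Q" using assms(3) by auto
  moreover have "fst z \<in> mcarrier N" using z assms(1) by (auto simp: dsum_carrier)
  ultimately have "fst z = mzero N" using z assms(2) by (cases z) auto
  with \<open>snd z = mzero Q\<close> show "z \<in> {mzero (dsum N Q)}" by (cases z) simp
qed

lemma direct_summand_dsum:
  assumes N: "right_module R N" and Q: "right_module R Q" and K: "submodule R (dsum N Q) K"
    and "direct_summand R N {x \<in> mcarrier N. (x, mzero Q) \<in> K}"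
    and "direct_summand R Q (snd ` K)"
  shows "direct_summand R (dsum N Q) K"
proof -
  interpret N: rmodule R N by (rule rmodule.intro) fact
  interpret Q: rmodule R Q by (rule rmodule.intro) fact
  interpret X: rmodule R "dsum N Q" by (rule rmodule.intro, rule right_module_dsum) fact+
  obtain C where C: "submodule R N C" "{x \<in> mcarrier N. (x, mzero Q) \<in> K} \<inter> C = {mzero N}"
    and NC: "mcarrier N \<subseteq> msum N {x \<in> mcarrier N. (x, mzero Q) \<in> K} C"
    using assms(4) by (auto simp: direct_summand_iff_msum)
  obtain T' where T': "submodule R Q T'" "snd ` K \<inter> T' = {mzero Q}"
    and QT: "mcarrier Q \<subseteq> msum Q (snd ` K) T'"
    using assms(5) by (auto simp: direct_summand_iff_msum)
  have W: "submodule R (dsum N Q) (C \<times> T')" by (rule submodule_Times[OF C(1) T'(1)])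
  let ?S = "msum (dsum N Q) K (C \<times> T')"
  have S: "submodule R (dsum N Q) ?S" by (rule X.submodule_msum[OF K W])
  have first: "(x, mzero Q) \<in> ?S" if "x \<in> mcarrier N" for x
  proof -
    obtain k c where "(k, mzero Q) \<in> K" "c \<in> C" "x = madd N k c"
      using NC \<open>x \<in> mcarrier N\<close> by (blast elim: msumE)
    moreover have "(c, mzero Q) \<in> C \<times> T'" using \<open>c \<in> C\<close> submodule_zero[OF T'(1)] by simp
    ultimately show ?thesis using msumI[where M="dsum N Q", of "(k, mzero Q)" K "(c, mzero Q)"] by simp
  qed
  have "(mzero N, y) \<in> ?S" if "y \<in> mcarrier Q" for y
  proof -
    obtain t t' where "t \<in> snd ` K" "t' \<in> T'" "y = madd Q t t'"
      using QT \<open>y \<in> mcarrier Q\<close> by (blast elim: msumE)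
    moreover from this obtain x where "(x, t) \<in> K" by force
    ultimately have x: "x \<in> mcarrier N" and t: "t \<in> mcarrier Q" and "(x, t) \<in> ?S" "(mzero N, t') \<in> ?S"
      using submodule_subset[OF K] submodule_zero[OF C(1)] X.msum_upper1[OF submodule_subset[OF K] W]
        X.msum_upper2[OF K submodule_subset[OF W]] by (auto simp: dsum_carrier)
    then have "(mzero N, t) \<in> ?S"
      using X.submodule_add_cancel[OF S first[OF x], of "(mzero N, t)"] by (simp add: dsum_carrier)
    then show ?thesis
      using submodule_add[OF S \<open>(mzero N, t) \<in> ?S\<close> \<open>(mzero N, t') \<in> ?S\<close>] \<open>y = madd Q t t'\<close>
      by simp
  qed
  then have span: "mcarrier (dsum N Q) \<subseteq> ?S" using dsum_generated[OF N Q S first] by blast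
  have "K \<inter> (C \<times> T') \<subseteq> {mzero (dsum N Q)}"
    by (rule dsum_inter_Times[OF submodule_subset[OF K]]) (simp_all add: C(2) T'(2))
  then have "K \<inter> (C \<times> T') = {mzero (dsum N Q)}"
    using submodule_zero[OF K] submodule_zero[OF W] by auto
  with span show ?thesis
    unfolding direct_summand_iff_msum using K W by blast
qed

definition hom_zero :: "('r, 'b) ring_scheme \<Rightarrow> ('r, 'a) rmod \<Rightarrow> ('r, 'c) rmod \<Rightarrow> bool" where
  "hom_zero R A B \<longleftrightarrow> (\<forall>f. mhom R A B f \<longrightarrow> (\<forall>x\<in>mcarrier A. f x = mzero B))"

lemma rickart_dsum_semisimple:
  assumes N: "right_module R N" and Q: "right_module R Q"
    and "rickart R N" and "semisimple R Q" and "hom_zero R N Q"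
  shows "rickart R (dsum N Q)"
  unfolding rickart_def
proof (intro allI impI)
  fix p assume p: "mhom R (dsum N Q) (dsum N Q) p"
  have X: "right_module R (dsum N Q)" using right_module_dsum[OF N Q] .
  define a where "a = fst \<circ> p \<circ> (\<lambda>x. (x, mzero Q))"
  have a: "mhom R N N a"
    unfolding a_def using mhom_comp[OF mhom_comp[OF mhom_Pair_zero[OF Q] p] mhom_fst]
    by (simp add: comp_assoc)
  have "mhom R N Q (snd \<circ> p \<circ> (\<lambda>x. (x, mzero Q)))"
    using mhom_comp[OF mhom_comp[OF mhom_Pair_zero[OF Q] p] mhom_snd] by (simp add: comp_assoc)
  then have "p (x, mzero Q) = (a x, mzero Q)" if "x \<in> mcarrier N" for x
    using \<open>hom_zero R N Q\<close> that unfolding hom_zero_def a_def by (metis comp_apply prod.collapse)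
  then have "{x \<in> mcarrier N. (x, mzero Q) \<in> mker (dsum N Q) (dsum N Q) p} = mker N N a"
    using rmodule.zero_closed[OF rmodule.intro[OF Q]] by (auto simp: mker_def dsum_carrier)
  then have "direct_summand R N {x \<in> mcarrier N. (x, mzero Q) \<in> mker (dsum N Q) (dsum N Q) p}"
    using \<open>rickart R N\<close> a by (simp add: rickart_def)
  moreover have "direct_summand R Q (snd ` mker (dsum N Q) (dsum N Q) p)"
    using \<open>semisimple R Q\<close> submodule_image[OF X Q mhom_snd submodule_mker[OF X X p]]
    by (simp add: semisimple_def)
  ultimately show "direct_summand R (dsum N Q) (mker (dsum N Q) (dsum N Q) p)"
    using direct_summand_dsum[OF N Q submodule_mker[OF X X p]] by blast
qed

definition single :: "('r, 'a) rmod \<Rightarrow> nat \<Rightarrow> 'a \<Rightarrow> nat \<Rightarrow> 'a" where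
  "single M i a = (\<lambda>j. if j = i then a else mzero M)"

context rmodule
begin

lemma submodule_carrier: "submodule R M (mcarrier M)"
  by (simp add: submodule_def)

lemma single_in_dpow: "\<lbrakk>a \<in> mcarrier M; i < n\<rbrakk> \<Longrightarrow> single M i a \<in> mcarrier (dpow M n)"
  by (simp add: single_def dpow_carrier)

lemma mhom_single: "i < n \<Longrightarrow> mhom R M (dpow M n) (single M i)"
  by (auto simp: mhom_def single_in_dpow) (auto simp: single_def)

lemma mhom_dpow_component: "mhom R (dpow M n) M (\<lambda>x. x j)"
  by (simp add: mhom_def dpow_component)

lemma dpow_Suc_decompose:
  assumes "x \<in> mcarrier (dpow M (Suc k))"
  shows "x(k := mzero M) \<in> mcarrier (dpow M k)"
    and "x = madd (dpow M n) (x(k := mzero M)) (single M k (x k))"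
  using assms dpow_component[OF assms] by (auto simp: dpow_carrier single_def le_Suc_eq)

lemma dpow_generated_by_single:
  assumes S: "submodule R (dpow M n) S" and single: "\<And>i a. \<lbrakk>i < n; a \<in> mcarrier M\<rbrakk> \<Longrightarrow> single M i a \<in> S"
  shows "mcarrier (dpow M n) \<subseteq> S"
proof -
  have "mcarrier (dpow M k) \<subseteq> S" if "k \<le> n" for k
    using that
  proof (induction k)
    case 0
    have "mcarrier (dpow M 0) = {mzero (dpow M n)}" by (auto simp: dpow_carrier)
    then show ?case using submodule_zero[OF S] by simp
  next
    case (Suc k)
    show ?case
    proof
      fix x assume x: "x \<in> mcarrier (dpow M (Suc k))"
      have "x(k := mzero M) \<in> S" using Suc dpow_Suc_decompose(1)[OF x] by auto
      moreover have "single M k (x k) \<in> S" using Suc.prems dpow_component[OF x] single by simp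
      ultimately show "x \<in> S" using dpow_Suc_decompose(2)[OF x] submodule_add[OF S] by metis
    qed
  qed
  then show ?thesis by blast
qed

end

lemma hom_zero_dpow_right:
  assumes "right_module R B" and "hom_zero R A B"
  shows "hom_zero R A (dpow B m)"
  unfolding hom_zero_def
proof (intro allI impI ballI)
  fix f x assume f: "mhom R A (dpow B m) f" and x: "x \<in> mcarrier A"
  interpret B: rmodule R B by (rule rmodule.intro) fact
  have "f x j = mzero B" for j
    using mhom_comp[OF f B.mhom_dpow_component] \<open>hom_zero R A B\<close> x
    unfolding hom_zero_def comp_def by blast
  then show "f x = mzero (dpow B m)" by auto
qed

lemma hom_zero_dpow_left:
  assumes A: "right_module R A" and B: "right_module R B" and "hom_zero R A B"
  shows "hom_zero R (dpow A m) B"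
  unfolding hom_zero_def
proof (intro allI impI)
  fix f assume f: "mhom R (dpow A m) B f"
  interpret A: rmodule R A by (rule rmodule.intro) fact
  have "mcarrier (dpow A m) \<subseteq> mker (dpow A m) B f"
  proof (rule A.dpow_generated_by_single)
    show "submodule R (dpow A m) (mker (dpow A m) B f)"
      by (rule submodule_mker[OF right_module_dpow[OF A] B f])
    fix i a assume "i < m" "a \<in> mcarrier A"
    then show "single A i a \<in> mker (dpow A m) B f"
      using mhom_comp[OF A.mhom_single f] \<open>hom_zero R A B\<close> A.single_in_dpow
      unfolding hom_zero_def mker_def comp_def by blast
  qed
  then show "\<forall>x\<in>mcarrier (dpow A m). f x = mzero B" by (auto simp: mker_def)
qed

lemma inter_msum_image_zero:
  assumes D: "right_module R D" and P: "right_module R P" and e: "mhom R P D e"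
    and T: "submodule R D T" and W: "submodule R D W" and TW: "T \<inter> W = {mzero D}"
    and trivial: "{a \<in> mcarrier P. e a \<in> msum D T W} \<subseteq> {mzero P}"
  shows "T \<inter> msum D W (e ` mcarrier P) \<subseteq> {mzero D}"
proof
  interpret D: rmodule R D by (rule rmodule.intro) fact
  fix t assume "t \<in> T \<inter> msum D W (e ` mcarrier P)"
  then obtain w a where t: "t \<in> T" and w: "w \<in> W" and a: "a \<in> mcarrier P"
    and t_eq: "t = madd D w (e a)"
    by (blast elim: msumE)
  have wD: "w \<in> mcarrier D" and eaD: "e a \<in> mcarrier D"
    using w a submodule_subset[OF W] mhom_closed[OF e] by auto
  have "madd D t (D.neg w) = e a"
    using wD eaD unfolding t_eq by (simp add: D.add_assoc D.add_left_commute[of w "e a"])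
  then have "e a \<in> msum D T W" using msumI[where M=D, OF t D.submodule_neg[OF W w]] by simp
  then have "e a = mzero D" using trivial a mhom_zero[OF P D e] by auto
  then show "t \<in> {mzero D}" using t w t_eq wD TW by auto
qed

text \<open>Either \<open>e(P)\<close> already lies in \<open>T \<oplus> W\<close>, or by simplicity it meets \<open>T \<oplus> W\<close> trivially and can
  be added to \<open>W\<close>.\<close>

lemma complement_extend_simple:
  assumes D: "right_module R D" and P: "simple_module R P" and e: "mhom R P D e"
    and T: "submodule R D T" and W: "submodule R D W" and TW: "T \<inter> W = {mzero D}"
  obtains W' where "submodule R D W'" "T \<inter> W' = {mzero D}"
    "msum D T W \<subseteq> msum D T W'" "e ` mcarrier P \<subseteq> msum D T W'"
proof -
  interpret D: rmodule R D by (rule rmodule.intro) fact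
  have P_module: "right_module R P" using P by (simp add: simple_module_def)
  interpret P: rmodule R P by (rule rmodule.intro) fact
  let ?S = "{a \<in> mcarrier P. e a \<in> msum D T W}"
  have "submodule R P ?S" by (rule submodule_vimage[OF P_module D e D.submodule_msum[OF T W]])
  then consider "?S = mcarrier P" | "?S = {mzero P}" using P by (auto simp: simple_module_def)
  then show thesis
  proof cases
    case 1
    then show thesis using that[OF W TW] by blast
  next
    case 2
    let ?E = "e ` mcarrier P"
    have E: "submodule R D ?E" by (rule submodule_image[OF P_module D e P.submodule_carrier])
    have W': "submodule R D (msum D W ?E)" by (rule D.submodule_msum[OF W E])
    have "T \<inter> msum D W ?E = {mzero D}"
      using inter_msum_image_zero[OF D P_module e T W TW] 2 submodule_zero[OF T] submodule_zero[OF W']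
      by blast
    moreover have "msum D T W \<subseteq> msum D T (msum D W ?E)"
      by (rule msum_mono[OF D.msum_upper1[OF submodule_subset[OF W] E]])
    moreover have "?E \<subseteq> msum D T (msum D W ?E)"
      using D.msum_upper2[OF W submodule_subset[OF E]] D.msum_upper2[OF T submodule_subset[OF W']]
      by blast
    ultimately show thesis using that[OF W'] by blast
  qed
qed

lemma semisimple_dpow:
  assumes P: "simple_module R P"
  shows "semisimple R (dpow P n)"
  unfolding semisimple_def
proof (intro allI impI)
  fix T assume T: "submodule R (dpow P n) T"
  have P_module: "right_module R P" using P by (simp add: simple_module_def)
  interpret P: rmodule R P by (rule rmodule.intro) fact
  have D: "right_module R (dpow P n)" by (rule right_module_dpow[OF P_module])
  interpret D: rmodule R "dpow P n" by (rule rmodule.intro) fact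
  have "\<exists>W. submodule R (dpow P n) W \<and> T \<inter> W = {mzero (dpow P n)} \<and>
      (\<forall>i<k. single P i ` mcarrier P \<subseteq> msum (dpow P n) T W)" if "k \<le> n" for k
    using that
  proof (induction k)
    case 0
    show ?case using D.submodule_zero_set submodule_zero[OF T] by blast
  next
    case (Suc k)
    then obtain W where W: "submodule R (dpow P n) W" "T \<inter> W = {mzero (dpow P n)}"
      and spanned: "\<forall>i<k. single P i ` mcarrier P \<subseteq> msum (dpow P n) T W"
      by auto
    have "k < n" using Suc.prems by simp
    obtain W' where W': "submodule R (dpow P n) W'" "T \<inter> W' = {mzero (dpow P n)}"
      and grow: "msum (dpow P n) T W \<subseteq> msum (dpow P n) T W'"
      and new: "single P k ` mcarrier P \<subseteq> msum (dpow P n) T W'"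
      by (rule complement_extend_simple[OF D P P.mhom_single[OF \<open>k < n\<close>] T W])
    have "single P i ` mcarrier P \<subseteq> msum (dpow P n) T W'" if "i < Suc k" for i
      using that spanned grow new by (cases "i = k") (auto simp: less_Suc_eq)
    then show ?case using W' by blast
  qed
  then obtain W where W: "submodule R (dpow P n) W" "T \<inter> W = {mzero (dpow P n)}"
    and spanned: "\<forall>i<n. single P i ` mcarrier P \<subseteq> msum (dpow P n) T W"
    by blast
  have "mcarrier (dpow P n) \<subseteq> msum (dpow P n) T W"
    using P.dpow_generated_by_single[OF D.submodule_msum[OF T W(1)]] spanned by blast
  then show "direct_summand R (dpow P n) T"
    unfolding direct_summand_iff_msum using T W by blast
qed

definition flatten :: "('r, 'a) rmod \<Rightarrow> nat \<Rightarrow> nat \<Rightarrow> (nat \<Rightarrow> nat \<Rightarrow> 'a) \<Rightarrow> nat \<Rightarrow> 'a" where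
  "flatten M l k x = (\<lambda>m. if m < l * k then x (m div l) (m mod l) else mzero M)"

definition unflatten :: "('r, 'a) rmod \<Rightarrow> nat \<Rightarrow> nat \<Rightarrow> (nat \<Rightarrow> 'a) \<Rightarrow> nat \<Rightarrow> nat \<Rightarrow> 'a" where
  "unflatten M l k y = (\<lambda>i j. if i < k \<and> j < l then y (i * l + j) else mzero M)"

lemma div_mod_less_mult: "(m::nat) < l * k \<Longrightarrow> m div l < k \<and> m mod l < l"
  by (metis less_mult_imp_div_less mod_less_divisor mult.commute mult_is_0 not_gr_zero not_less_zero)

lemma mult_add_less_mult: "\<lbrakk>(i::nat) < k; j < l\<rbrakk> \<Longrightarrow> i * l + j < l * k"
proof -
  assume "i < k" "j < l"
  then have "i * l + j < Suc i * l" by simp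
  also have "\<dots> \<le> k * l" using \<open>i < k\<close> by (intro mult_le_mono1) simp
  finally show ?thesis by (simp add: mult.commute)
qed

context rmodule
begin

lemma dpow_dpow_carrierD:
  assumes "x \<in> mcarrier (dpow (dpow M l) k)"
  shows "x i j \<in> mcarrier M" and "i \<ge> k \<Longrightarrow> x i j = mzero M" and "j \<ge> l \<Longrightarrow> x i j = mzero M"
proof -
  have "x i \<in> mcarrier (dpow M l)" using assms by (cases "i < k") (auto simp: dpow_carrier)
  then show "x i j \<in> mcarrier M" "i \<ge> k \<Longrightarrow> x i j = mzero M" "j \<ge> l \<Longrightarrow> x i j = mzero M"
    using assms dpow_component by (auto simp: dpow_carrier)
qed

lemma mhom_flatten: "mhom R (dpow (dpow M l) k) (dpow M (l * k)) (flatten M l k)"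
  unfolding mhom_def
proof (intro conjI ballI Pi_I)
  fix x assume "x \<in> mcarrier (dpow (dpow M l) k)"
  note x_entries = dpow_dpow_carrierD(1)[OF this]
  show "flatten M l k x \<in> mcarrier (dpow M (l * k))"
    unfolding flatten_def dpow_carrier using x_entries by simp
qed (simp_all add: flatten_def fun_eq_iff)

lemma mhom_unflatten: "mhom R (dpow M (l * k)) (dpow (dpow M l) k) (unflatten M l k)"
  unfolding mhom_def
proof (intro conjI ballI Pi_I)
  fix y assume "y \<in> mcarrier (dpow M (l * k))"
  note y_entries = dpow_component[OF this]
  show "unflatten M l k y \<in> mcarrier (dpow (dpow M l) k)"
    unfolding unflatten_def dpow_carrier using y_entries by (simp add: fun_eq_iff)
qed (simp_all add: unflatten_def fun_eq_iff)

lemma miso_flatten: "miso R (dpow (dpow M l) k) (dpow M (l * k)) (flatten M l k) (unflatten M l k)"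
  unfolding miso_def
proof (intro conjI ballI mhom_flatten mhom_unflatten)
  fix x assume x: "x \<in> mcarrier (dpow (dpow M l) k)"
  show "unflatten M l k (flatten M l k x) = x"
    using mult_add_less_mult dpow_dpow_carrierD(2,3)[OF x]
    by (auto simp: flatten_def unflatten_def fun_eq_iff not_less)
next
  fix y assume "y \<in> mcarrier (dpow M (l * k))"
  then show "flatten M l k (unflatten M l k y) = y"
    using div_mod_less_mult by (auto simp: flatten_def unflatten_def fun_eq_iff dpow_carrier)
qed

end

definition split_dpow :: "(nat \<Rightarrow> 'a \<times> 'c) \<Rightarrow> (nat \<Rightarrow> 'a) \<times> (nat \<Rightarrow> 'c)" where
  "split_dpow x = (\<lambda>i. fst (x i), \<lambda>i. snd (x i))"

definition join_dpow :: "(nat \<Rightarrow> 'a) \<times> (nat \<Rightarrow> 'c) \<Rightarrow> nat \<Rightarrow> 'a \<times> 'c" where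
  "join_dpow y = (\<lambda>i. (fst y i, snd y i))"

lemma miso_split_dpow: "miso R (dpow (dsum A B) k) (dsum (dpow A k) (dpow B k)) split_dpow join_dpow"
  unfolding miso_def mhom_def by (auto simp: split_dpow_def join_dpow_def dsum_carrier dpow_carrier)

theorem mainTheorem18:
  fixes R :: "('r, 'b) ring_scheme" and M :: "('r, 'a) rmod" and P :: "('r, 'c) rmod" and l n :: nat
  assumes "right_module R M"
    and "finite_sigma_rickart R M"
    and "simple_module R P"
    and "\<forall>f. mhom R M P f \<longrightarrow> (\<forall>x\<in>mcarrier M. f x = mzero P)"
    and "l > 0" and "n > 0"
  shows "finite_sigma_rickart R (dsum (dpow M l) (dpow P n))"
  unfolding finite_sigma_rickart_def
proof (intro allI impI)
  fix k :: nat assume "k > 0"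
  have M: "right_module R M" and P: "right_module R P"
    using assms(1,3) by (simp_all add: simple_module_def)
  have Ml: "right_module R (dpow M l)" and Pn: "right_module R (dpow P n)"
    and Mlk: "right_module R (dpow (dpow M l) k)" and Pnk: "right_module R (dpow (dpow P n) k)"
    using M P by (simp_all add: right_module_dpow)
  have "rickart R (dpow M (l * k))"
    using assms(2) \<open>l > 0\<close> \<open>k > 0\<close> by (simp add: finite_sigma_rickart_def)
  then have "rickart R (dpow (dpow M l) k)"
    using rickart_miso[OF Mlk right_module_dpow[OF M] rmodule.miso_flatten] M by (simp add: rmodule_iff)
  moreover have "semisimple R (dpow (dpow P n) k)"
    using semisimple_miso[OF Pnk right_module_dpow[OF P] rmodule.miso_flatten semisimple_dpow[OF assms(3)]] P
    by (simp add: rmodule_iff)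
  moreover have "hom_zero R (dpow (dpow M l) k) (dpow (dpow P n) k)"
    using assms(4) unfolding hom_zero_def[symmetric]
    by (intro hom_zero_dpow_left hom_zero_dpow_right M P Ml Pn Pnk right_module_dpow)
  ultimately have "rickart R (dsum (dpow (dpow M l) k) (dpow (dpow P n) k))"
    by (rule rickart_dsum_semisimple[OF Mlk Pnk])
  then show "rickart R (dpow (dsum (dpow M l) (dpow P n)) k)"
    by (rule rickart_miso[OF right_module_dpow[OF right_module_dsum[OF Ml Pn]]
          right_module_dsum[OF Mlk Pnk] miso_split_dpow])
qed

end
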